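(* Let $\alpha,\beta>0$ with $\beta>\alpha$, and let $S_0,I_0$ satisfy $S_0>I_0>0$, $S_0+I_0=1$ and $S_0>\alpha/\beta$. Let $(S(t),I(t),R(t))$ be the solution of $$\dot S=-\frac{\beta SI}{S+I},\qquad \dot I=\frac{\beta SI}{S+I}-\alpha I,\qquad \dot R=\alpha I$$ with $S(0)=S_0$, $I(0)=I_0$, $R(0)=0$. Then any two of the curves $S(t)$, $I(t)$, $R(t)$ (for $t>0$) intersect exactly once. Furthermore, letting $t_{\mathrm{peak}}>0$ denote the time at which $I(t)$ attains its maximum: (i) the curves $S(t)$ and $I(t)$ intersect before $t_{\mathrm{peak}}$ if $\beta>2\alpha$, exactly at $t_{\mathrm{peak}}$ if $\beta=2\alpha$, and after $t_{\mathrm{peak}}$ if $\beta<2\alpha$; (ii) the three curves $S(t)$, $I(t)$, $R(t)$ intersect in a common point if and only if $\frac{\beta}{\alpha}<\frac{\log 3}{\log 3-\log 2}$ and $S_0=\frac13\left(\frac32\right)^{\beta/\alpha}$; (iii) the three curves intersect in a common point located at $t=t_{\mathrm{peak}}$ if and only if $\beta=2\alpha$ and $S_0=\frac34$.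
   Context: Modified SIR epidemiological model with recovery rate $\alpha$ and transmission rate $\beta$; $S,I,R$ are fractions of susceptible, infective and removed individuals, with total population $S+I+R=1$. *)

theory Defs
  imports Complex_Main
begin

end

theory Submission
  imports Defs "HOL-Analysis.Analysis"
begin

text \<open>
  Put N = S + I and \<kappa> = \<beta>/\<alpha>. The total S + I + R is conserved and S N^(-\<kappa>) is a first
  integral, so along the solution S = S0 N^\<kappa>, I = N - S0 N^\<kappa> and R = 1 - N; positivity of
  S and I propagates along time by a first-failure argument. As N' = -\<alpha> I < 0 and
  N(t) <= exp(-\<alpha> (1 - S0) t), N is a decreasing bijection from (0,\<infinity>) onto (0,1), so each
  claim becomes a statement about an explicit function of n = N(t) in (0,1): S = I iff
  2 S0 n^(\<kappa>-1) = 1, S = R iff S0 n^\<kappa> = 1 - n, I = R iff the concave equation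
  2n - S0 n^\<kappa> = 1 holds, and I is maximal iff \<kappa> S0 n^(\<kappa>-1) = 1. Comparing the last
  condition with the first orders crossing and peak by the sign of \<kappa> - 2, and a triple
  point is a time where N = 2/3 and S = 1/3.
\<close>

lemma linear_minus_powr_deriv:
  fixes a c k z :: real
  assumes "0 < z"
  shows "((\<lambda>n. a * n - c * n powr k) has_real_derivative a - c * (k * z powr (k - 1))) (at z)"
  using assms by (auto intro!: derivative_eq_intros)

lemma linear_minus_powr_increasing:
  fixes a c k p x y :: real
  assumes "1 < k" "0 < c" "k * c * p powr (k - 1) = a" "0 < x" "x < y" "y \<le> p"
  shows "a * x - c * x powr k < a * y - c * y powr k"
proof (rule DERIV_pos_imp_increasing_open[OF \<open>x < y\<close>])
  fix z assume z: "x < z" "z < y"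
  have "z powr (k - 1) < p powr (k - 1)"
    using z assms by (intro powr_less_mono2) auto
  then have "k * c * z powr (k - 1) < k * c * p powr (k - 1)"
    by (intro mult_strict_left_mono) (use assms in auto)
  then have "0 < a - c * (k * z powr (k - 1))"
    using assms(3) by (simp add: algebra_simps)
  moreover have "0 < z"
    using z assms by linarith
  ultimately show "\<exists>d. ((\<lambda>n. a * n - c * n powr k) has_real_derivative d) (at z) \<and> 0 < d"
    using linear_minus_powr_deriv by blast
next
  show "continuous_on {x..y} (\<lambda>n. a * n - c * n powr k)"
    using assms by (intro continuous_intros) auto
qed

lemma linear_minus_powr_decreasing:
  fixes a c k p x y :: real
  assumes "1 < k" "0 < c" "k * c * p powr (k - 1) = a" "0 < p" "p \<le> x" "x < y"
  shows "a * y - c * y powr k < a * x - c * x powr k"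
proof (rule DERIV_neg_imp_decreasing_open[OF \<open>x < y\<close>])
  fix z assume z: "x < z" "z < y"
  have "p powr (k - 1) < z powr (k - 1)"
    using z assms by (intro powr_less_mono2) auto
  then have "k * c * p powr (k - 1) < k * c * z powr (k - 1)"
    by (intro mult_strict_left_mono) (use assms in auto)
  then have "a - c * (k * z powr (k - 1)) < 0"
    using assms(3) by (simp add: algebra_simps)
  moreover have "0 < z"
    using z assms by linarith
  ultimately show "\<exists>d. ((\<lambda>n. a * n - c * n powr k) has_real_derivative d) (at z) \<and> d < 0"
    using linear_minus_powr_deriv by blast
next
  show "continuous_on {x..y} (\<lambda>n. a * n - c * n powr k)"
    using assms by (intro continuous_intros) auto
qed

lemma linear_minus_powr_max:
  fixes c k p n :: real
  assumes "1 < k" "0 < c" "k * c * p powr (k - 1) = 1" "0 < p" "0 < n" "n \<noteq> p"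
  shows "n - c * n powr k < p - c * p powr k"
  using linear_minus_powr_increasing[of k c p 1 n p] linear_minus_powr_decreasing[of k c p 1 p n] assms
  by (cases "n < p") auto

lemma ex1_mult_powr_eq_1:
  fixes c e :: real
  assumes "0 < e" "1 < c"
  shows "\<exists>!n. n \<in> {0<..<1} \<and> c * n powr e = 1"
proof (rule ex1I)
  show "(1 / c) powr (1 / e) \<in> {0<..<1} \<and> c * ((1 / c) powr (1 / e)) powr e = 1"
    using assms powr_less_mono2[of "1 / e" "1 / c" 1] by (auto simp: powr_powr)
next
  fix n assume n: "n \<in> {0<..<1} \<and> c * n powr e = 1"
  then have "n powr e = 1 / c"
    using assms by (simp add: field_simps)
  then have "(n powr e) powr (1 / e) = (1 / c) powr (1 / e)"
    by simp
  then show "n = (1 / c) powr (1 / e)"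
    using n assms by (simp add: powr_powr)
qed

lemma ex1_powr_eq_one_minus:
  fixes k c :: real
  assumes "0 < k" "0 < c"
  shows "\<exists>!n. n \<in> {0<..<1} \<and> c * n powr k = 1 - n"
proof -
  let ?f = "\<lambda>n::real. c * n powr k + n"
  have "continuous_on {0..1} ?f"
    using assms by (intro continuous_intros continuous_on_powr') auto
  then obtain n where n: "0 \<le> n" "n \<le> 1" "?f n = 1"
    using IVT'[of ?f 0 1 1] assms by auto
  have "n \<noteq> 0" "n \<noteq> 1"
    using n assms by auto
  with n have root: "n \<in> {0<..<1} \<and> c * n powr k = 1 - n"
    by auto
  have mono: "?f x < ?f y" if "0 < x" "x < y" for x y
    using that assms powr_less_mono2[of k x y] by (intro add_strict_mono) auto
  show ?thesis
  proof (rule ex1I[of _ n])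
    show "n \<in> {0<..<1} \<and> c * n powr k = 1 - n"
      by (fact root)
  next
    fix m assume "m \<in> {0<..<1} \<and> c * m powr k = 1 - m"
    then show "m = n"
      using mono[of m n] mono[of n m] root by (cases m n rule: linorder_cases) auto
  qed
qed

lemma ex1_two_minus_powr_eq_one:
  fixes k c :: real
  assumes "1 < k" "0 < c" "c < 1"
  shows "\<exists>!n. n \<in> {0<..<1} \<and> 2 * n - c * n powr k = 1"
proof -
  let ?g = "\<lambda>n::real. 2 * n - c * n powr k"
  have "continuous_on {0..1} ?g"
    using assms by (intro continuous_intros continuous_on_powr') auto
  then obtain n where n: "0 \<le> n" "n \<le> 1" "?g n = 1"
    using IVT'[of ?g 0 1 1] assms by auto
  have "n \<noteq> 0" "n \<noteq> 1"
    using n assms by auto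
  with n have root: "n \<in> {0<..<1} \<and> ?g n = 1"
    by auto
  define p where "p = (2 / (k * c)) powr (1 / (k - 1))"
  have p: "0 < p" "k * c * p powr (k - 1) = 2"
    using assms by (auto simp: p_def powr_powr)
  \<comment> \<open>by concavity, a second root y > x would force the value at 1 below 1\<close>
  have no_two_roots: False if "0 < x" "x < y" "y < 1" "?g x = 1" "?g y = 1" for x y
  proof (cases "y \<le> p")
    case True
    then show False
      using linear_minus_powr_increasing[OF assms(1,2) p(2), of x y] that by simp
  next
    case False
    then show False
      using linear_minus_powr_decreasing[OF assms(1,2) p(2,1), of y 1] that assms by simp
  qed
  show ?thesis
  proof (rule ex1I[of _ n])
    show "n \<in> {0<..<1} \<and> ?g n = 1"
      by (fact root)
  next
    fix m assume "m \<in> {0<..<1} \<and> ?g m = 1"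
    then show "m = n"
      using no_two_roots[of m n] no_two_roots[of n m] root by (cases m n rule: linorder_cases) auto
  qed
qed

lemma bij_betw_ex1_iff:
  assumes "bij_betw f A B" and "\<And>x. x \<in> A \<Longrightarrow> Q x \<longleftrightarrow> P (f x)"
  shows "(\<exists>!x. x \<in> A \<and> Q x) \<longleftrightarrow> (\<exists>!y. y \<in> B \<and> P y)"
proof -
  have "(\<exists>!x. x \<in> A \<and> Q x) \<longleftrightarrow> (\<exists>!x. x \<in> A \<and> P (f x))"
    using assms(2) by blast
  also have "\<dots> \<longleftrightarrow> (\<exists>!y. y \<in> B \<and> P y)"
    using assms(1) unfolding bij_betw_def inj_on_def by blast
  finally show ?thesis .
qed

lemma third_three_halves_powr_less_1_iff:
  fixes k :: real
  shows "1 / 3 * (3 / 2) powr k < 1 \<longleftrightarrow> k < ln 3 / (ln 3 - ln 2)"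
proof -
  have ln32: "ln (3 / 2 :: real) = ln 3 - ln 2"
    by (simp add: ln_div)
  have "1 / 3 * (3 / 2) powr k < 1 \<longleftrightarrow> (3 / 2) powr k < (3 :: real)"
    by simp
  also have "\<dots> \<longleftrightarrow> ln ((3 / 2) powr k) < ln (3 :: real)"
    by (subst ln_less_cancel_iff) auto
  also have "\<dots> \<longleftrightarrow> k * (ln 3 - ln 2) < ln 3"
    by (simp add: ln32)
  also have "\<dots> \<longleftrightarrow> k < ln 3 / (ln 3 - ln 2)"
    by (simp add: pos_less_divide_eq)
  finally show ?thesis .
qed

lemma continuous_on_atLeast_pos_induct:
  fixes f :: "real \<Rightarrow> real"
  assumes cont: "continuous_on {0..} f" and "0 < f 0"
    and step: "\<And>T. 0 < T \<Longrightarrow> (\<And>u. 0 \<le> u \<Longrightarrow> u < T \<Longrightarrow> 0 < f u) \<Longrightarrow> 0 < f T"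
    and "0 \<le> t"
  shows "0 < f t"
proof (rule ccontr)
  assume "\<not> 0 < f t"
  define P where "P = {0..} \<inter> f -` {..0}"
  have "t \<in> P"
    using \<open>0 \<le> t\<close> \<open>\<not> 0 < f t\<close> by (simp add: P_def)
  moreover have "closed P"
    unfolding P_def using cont by (rule continuous_closed_preimage) auto
  moreover have "bdd_below P"
    by (rule bdd_belowI[of _ 0]) (simp add: P_def)
  ultimately have T: "Inf P \<in> P"
    using closed_contains_Inf by blast
  have "0 < f u" if "0 \<le> u" "u < Inf P" for u
    using cInf_lower[OF _ \<open>bdd_below P\<close>, of u] that by (force simp: P_def)
  moreover have "0 < Inf P"
    using T \<open>0 < f 0\<close> by (cases "Inf P = 0") (auto simp: P_def)
  ultimately have "0 < f (Inf P)"
    using step by blast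
  with T show False
    by (simp add: P_def)
qed

lemma powr_mult_less_self:
  fixes c k n :: real
  assumes "0 < c" "c < 1" "1 \<le> k" "0 < n" "n \<le> 1"
  shows "c * n powr k < n"
proof -
  have "c * n powr k < n powr k"
    using assms by simp
  also have "n powr k \<le> n"
    using assms by (intro powr_le_one_le)
  finally show ?thesis .
qed

locale sir =
  fixes \<alpha> \<beta> :: real and S I R :: "real \<Rightarrow> real"
  assumes alpha_pos: "0 < \<alpha>"
    and S_deriv: "\<And>t. 0 \<le> t \<Longrightarrow>
       (S has_real_derivative (- \<beta> * S t * I t / (S t + I t))) (at t within {0..})"
    and I_deriv: "\<And>t. 0 \<le> t \<Longrightarrow>
       (I has_real_derivative (\<beta> * S t * I t / (S t + I t) - \<alpha> * I t)) (at t within {0..})"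
    and R_deriv: "\<And>t. 0 \<le> t \<Longrightarrow> (R has_real_derivative (\<alpha> * I t)) (at t within {0..})"
begin

definition \<kappa> :: real where "\<kappa> = \<beta> / \<alpha>"

definition N :: "real \<Rightarrow> real" where "N t = S t + I t"

lemma N_deriv: "0 \<le> t \<Longrightarrow> (N has_real_derivative - \<alpha> * I t) (at t within {0..})"
  using DERIV_add[OF S_deriv I_deriv, of t] by (simp add: N_def[abs_def])

lemma at_within_atLeast_0: "0 < t \<Longrightarrow> at t within {0..} = at (t::real)"
  by (rule at_within_interior) (simp add: interior_real_atLeast)

lemma N_deriv_at: "0 < t \<Longrightarrow> (N has_real_derivative - \<alpha> * I t) (at t)"
  using N_deriv[of t] by (simp add: at_within_atLeast_0)

lemma continuous_S: "continuous_on {0..} S"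
  by (rule DERIV_continuous_on[OF S_deriv]) simp

lemma continuous_I: "continuous_on {0..} I"
  by (rule DERIV_continuous_on[OF I_deriv]) simp

lemma continuous_R: "continuous_on {0..} R"
  by (rule DERIV_continuous_on[OF R_deriv]) simp

lemma continuous_N: "continuous_on {0..} N"
  by (rule DERIV_continuous_on[OF N_deriv]) simp

lemma total_population_const:
  assumes "0 \<le> t"
  shows "S t + I t + R t = S 0 + I 0 + R 0"
proof -
  have "((\<lambda>u. S u + I u + R u) has_real_derivative 0) (at u within {0..})" if "0 \<le> u" for u
    using DERIV_add[OF DERIV_add[OF S_deriv I_deriv] R_deriv, OF that that that] by simp
  then have "\<exists>c. \<forall>u\<in>{0..}. S u + I u + R u = c"
    by (intro has_field_derivative_zero_constant) auto
  then obtain c where c: "\<And>u. u \<in> {0..} \<Longrightarrow> S u + I u + R u = c"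
    by blast
  show ?thesis
    using c[of t] c[of 0] assms by simp
qed

lemma R_mono:
  assumes "0 \<le> T" and "\<And>u. 0 < u \<Longrightarrow> u < T \<Longrightarrow> 0 \<le> I u"
  shows "R 0 \<le> R T"
proof (rule DERIV_nonneg_imp_increasing_open[OF \<open>0 \<le> T\<close>])
  fix u assume "0 < u" "u < T"
  then show "\<exists>d. (R has_real_derivative d) (at u) \<and> 0 \<le> d"
    using R_deriv[of u] assms(2)[of u] alpha_pos by (auto simp: at_within_atLeast_0)
qed (rule continuous_on_subset[OF continuous_R], auto)

lemma N_exp_mono:
  assumes "0 \<le> T" and "\<And>u. 0 < u \<Longrightarrow> u < T \<Longrightarrow> 0 \<le> S u"
  shows "N 0 \<le> N T * exp (\<alpha> * T)"
proof -
  have "N 0 * exp (\<alpha> * 0) \<le> N T * exp (\<alpha> * T)"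
  proof (rule DERIV_nonneg_imp_increasing_open[OF \<open>0 \<le> T\<close>])
    fix u assume u: "0 < u" "u < T"
    have "((\<lambda>t. N t * exp (\<alpha> * t)) has_real_derivative
        - \<alpha> * I u * exp (\<alpha> * u) + N u * (exp (\<alpha> * u) * \<alpha>)) (at u)"
      using u by (auto intro!: derivative_eq_intros N_deriv_at)
    moreover have "- \<alpha> * I u * exp (\<alpha> * u) + N u * (exp (\<alpha> * u) * \<alpha>)
        = \<alpha> * S u * exp (\<alpha> * u)"
      by (simp add: N_def algebra_simps)
    ultimately show "\<exists>d. ((\<lambda>t. N t * exp (\<alpha> * t)) has_real_derivative d) (at u) \<and> 0 \<le> d"
      using assms(2)[OF u] alpha_pos by force
  qed (intro continuous_intros continuous_on_subset[OF continuous_N], auto)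
  then show ?thesis
    by simp
qed

lemma S_N_powr_const:
  assumes "0 \<le> T" and N_pos: "\<And>u. 0 \<le> u \<Longrightarrow> u \<le> T \<Longrightarrow> 0 < N u"
  shows "S T * N T powr - \<kappa> = S 0 * N 0 powr - \<kappa>"
proof (cases "T = 0")
  case False
  show ?thesis
  proof (rule DERIV_isconst_end[of 0 T "\<lambda>t. S t * N t powr - \<kappa>", simplified])
    show "0 < T"
      using assms(1) False by simp
    show "continuous_on {0..T} (\<lambda>t. S t * N t powr - \<kappa>)"
      by (intro continuous_intros continuous_on_subset[OF continuous_S]
          continuous_on_subset[OF continuous_N]) (force dest: N_pos)+
  next
    fix u assume u: "0 < u" "u < T"
    then have Nu: "0 < N u"
      using N_pos by simp
    have "(S has_real_derivative - \<beta> * S u * I u / (S u + I u)) (at u)"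
      using S_deriv[of u] u by (simp add: at_within_atLeast_0)
    moreover have "((\<lambda>t. N t powr - \<kappa>) has_real_derivative
        - \<kappa> * N u powr (- \<kappa> - 1) * (- \<alpha> * I u)) (at u)"
      using DERIV_fun_powr[OF N_deriv_at[OF u(1)] Nu, of "- \<kappa>"] by simp
    ultimately have "((\<lambda>t. S t * N t powr - \<kappa>) has_real_derivative
        (- \<beta> * S u * I u / (S u + I u)) * N u powr - \<kappa>
          + (- \<kappa> * N u powr (- \<kappa> - 1) * (- \<alpha> * I u)) * S u) (at u)"
      by (rule DERIV_mult)
    moreover have "(- \<beta> * S u * I u / (S u + I u)) * N u powr - \<kappa>
        + (- \<kappa> * N u powr (- \<kappa> - 1) * (- \<alpha> * I u)) * S u = 0"
    proof -
      have "N u powr (- \<kappa> - 1) = N u powr - \<kappa> / N u"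
        using Nu by (simp add: powr_diff)
      moreover have "S u + I u = N u"
        by (simp add: N_def)
      ultimately show ?thesis
        using Nu alpha_pos by (simp add: \<kappa>_def field_simps)
    qed
    ultimately show "((\<lambda>t. S t * N t powr - \<kappa>) has_real_derivative 0) (at u)"
      by simp
  qed
qed simp

end

locale sir_epidemic = sir +
  fixes S0 :: real
  assumes alpha_less_beta: "\<alpha> < \<beta>"
    and S_init: "S 0 = S0" and I_init: "I 0 = 1 - S0" and R_init: "R 0 = 0"
    and S0_pos: "0 < S0" and S0_less_1: "S0 < 1"
begin

lemma kappa_gt_1: "1 < \<kappa>"
  using alpha_pos alpha_less_beta by (simp add: \<kappa>_def)

lemma N_init: "N 0 = 1"
  by (simp add: N_def S_init I_init)

lemma R_eq: "0 \<le> t \<Longrightarrow> R t = 1 - N t"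
  using total_population_const[of t] by (simp add: N_def S_init I_init R_init)

lemma S_eq_while_N_pos:
  assumes "0 \<le> T" and "\<And>u. 0 \<le> u \<Longrightarrow> u \<le> T \<Longrightarrow> 0 < N u"
  shows "S T = S0 * N T powr \<kappa>"
proof -
  have "S T * N T powr - \<kappa> = S0"
    using S_N_powr_const[OF assms] by (simp add: N_init S_init)
  moreover have "0 < N T"
    using assms by simp
  ultimately show ?thesis
    by (simp add: powr_minus field_simps)
qed

lemma S_I_pos_at_limit:
  assumes "0 < T" and pos: "\<And>u. 0 \<le> u \<Longrightarrow> u < T \<Longrightarrow> 0 < S u \<and> 0 < I u"
  shows "0 < S T \<and> 0 < I T"
proof -
  have "0 \<le> I u" if "0 < u" "u < T" for u
    using pos[of u] that by simp
  then have "R 0 \<le> R T"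
    using less_imp_le[OF assms(1)] by (rule R_mono[rotated])
  then have N_le_1: "N T \<le> 1"
    using R_eq[of T] assms(1) R_init by simp
  have "0 \<le> S u" if "0 < u" "u < T" for u
    using pos[of u] that by simp
  then have "N 0 \<le> N T * exp (\<alpha> * T)"
    using less_imp_le[OF assms(1)] by (rule N_exp_mono[rotated])
  then have "0 < N T * exp (\<alpha> * T)"
    using N_init by simp
  then have N_T: "0 < N T"
    by (simp add: zero_less_mult_iff)
  have "0 < N u" if "0 \<le> u" "u \<le> T" for u
    using pos[of u] N_T that by (cases "u = T") (auto simp: N_def)
  then have S_T: "S T = S0 * N T powr \<kappa>"
    using assms(1) by (intro S_eq_while_N_pos) auto
  have "S0 * N T powr \<kappa> < N T"
    using S0_pos S0_less_1 kappa_gt_1 N_T N_le_1 by (intro powr_mult_less_self) auto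
  moreover have "0 < S T"
    using S_T S0_pos N_T by simp
  moreover have "I T = N T - S T"
    by (simp add: N_def)
  ultimately show ?thesis
    using S_T by linarith
qed

lemma S_I_pos:
  assumes "0 \<le> t"
  shows "0 < S t \<and> 0 < I t"
proof -
  have "0 < min (S t) (I t)"
  proof (rule continuous_on_atLeast_pos_induct[OF _ _ _ assms])
    show "continuous_on {0..} (\<lambda>t. min (S t) (I t))"
      by (intro continuous_intros continuous_S continuous_I)
    show "0 < min (S 0) (I 0)"
      using S0_pos S0_less_1 by (simp add: S_init I_init)
    show "0 < min (S T) (I T)"
      if "0 < T" "\<And>u. 0 \<le> u \<Longrightarrow> u < T \<Longrightarrow> 0 < min (S u) (I u)" for T
      using S_I_pos_at_limit[of T] that by simp
  qed
  then show ?thesis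
    by simp
qed

lemma I_pos: "0 \<le> t \<Longrightarrow> 0 < I t"
  using S_I_pos by blast

lemma N_pos: "0 \<le> t \<Longrightarrow> 0 < N t"
  using S_I_pos by (simp add: N_def add_pos_pos)

lemma S_eq: "0 \<le> t \<Longrightarrow> S t = S0 * N t powr \<kappa>"
  using S_eq_while_N_pos N_pos by simp

lemma I_eq:
  assumes "0 \<le> t"
  shows "I t = N t - S0 * N t powr \<kappa>"
  unfolding S_eq[OF assms, symmetric] by (simp add: N_def)

lemma N_strict_decreasing:
  assumes "0 \<le> s" "s < t"
  shows "N t < N s"
proof (rule DERIV_neg_imp_decreasing_open[OF \<open>s < t\<close>])
  fix u assume "s < u" "u < t"
  then have "0 < u"
    using assms by simp
  then have "(N has_real_derivative - \<alpha> * I u) (at u)" "- \<alpha> * I u < 0"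
    using N_deriv_at I_pos alpha_pos by auto
  then show "\<exists>d. (N has_real_derivative d) (at u) \<and> d < 0"
    by blast
qed (rule continuous_on_subset[OF continuous_N], use assms in auto)

lemma N_less_iff:
  assumes "0 \<le> s" "0 \<le> t"
  shows "N s < N t \<longleftrightarrow> t < s"
  using N_strict_decreasing[of s t] N_strict_decreasing[of t s] assms
  by (cases s t rule: linorder_cases) auto

lemma N_inj:
  assumes "0 \<le> s" "0 \<le> t" "N s = N t"
  shows "s = t"
  using N_strict_decreasing[of s t] N_strict_decreasing[of t s] assms
  by (cases s t rule: linorder_cases) auto

lemma N_less_1: "0 < t \<Longrightarrow> N t < 1"
  using N_strict_decreasing[of 0 t] N_init by simp

text \<open>Since S = S0 N^\<kappa> <= S0 N, we have N' = -\<alpha> I <= -\<alpha> (1 - S0) N.\<close>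
lemma N_exp_decay:
  assumes "0 \<le> t"
  shows "N t * exp (\<alpha> * (1 - S0) * t) \<le> 1"
proof -
  let ?c = "\<alpha> * (1 - S0)"
  have "N t * exp (?c * t) \<le> N 0 * exp (?c * 0)"
  proof (rule DERIV_nonpos_imp_decreasing_open[OF assms])
    fix u assume u: "0 < u" "u < t"
    have "((\<lambda>t. N t * exp (?c * t)) has_real_derivative
        - \<alpha> * I u * exp (?c * u) + N u * (exp (?c * u) * ?c)) (at u)"
      using u by (auto intro!: derivative_eq_intros N_deriv_at)
    moreover have "- \<alpha> * I u * exp (?c * u) + N u * (exp (?c * u) * ?c)
        = \<alpha> * exp (?c * u) * (S0 * N u powr \<kappa> - S0 * N u)"
      unfolding I_eq[OF less_imp_le[OF u(1)]] by (simp add: algebra_simps)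
    moreover have "S0 * N u powr \<kappa> \<le> S0 * N u"
      using powr_le_one_le[of "N u" \<kappa>] N_pos[of u] N_less_1[of u] kappa_gt_1 S0_pos u
      by (intro mult_left_mono) auto
    then have "\<alpha> * exp (?c * u) * (S0 * N u powr \<kappa> - S0 * N u) \<le> 0"
      using alpha_pos by (intro mult_nonneg_nonpos) auto
    ultimately show "\<exists>d. ((\<lambda>t. N t * exp (?c * t)) has_real_derivative d) (at u) \<and> d \<le> 0"
      by auto
  qed (intro continuous_intros continuous_on_subset[OF continuous_N], auto)
  then show ?thesis
    by (simp add: N_init)
qed

lemma N_attains:
  assumes "0 < v" "v < 1"
  shows "\<exists>t>0. N t = v"
proof -
  define t where "t = - ln v / (\<alpha> * (1 - S0))"
  have "ln v < 0"
    using assms by simp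
  then have "0 \<le> t"
    using alpha_pos S0_less_1 by (simp add: t_def divide_nonpos_pos)
  have "\<alpha> * (1 - S0) * t = - ln v"
    using alpha_pos S0_less_1 by (simp add: t_def)
  then have "v * exp (\<alpha> * (1 - S0) * t) = 1"
    using assms by (simp add: exp_minus)
  then have "N t * exp (\<alpha> * (1 - S0) * t) \<le> v * exp (\<alpha> * (1 - S0) * t)"
    using N_exp_decay[OF \<open>0 \<le> t\<close>] by simp
  then have "N t \<le> v"
    by (rule mult_right_le_imp_le) simp
  then have "\<exists>u. 0 \<le> u \<and> u \<le> t \<and> N u = v"
    using \<open>0 \<le> t\<close> assms N_init continuous_on_subset[OF continuous_N]
    by (intro IVT2') auto
  then obtain u where "0 \<le> u" "N u = v"
    by blast
  moreover have "u \<noteq> 0"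
    using \<open>N u = v\<close> assms N_init by auto
  ultimately have "0 < u"
    by simp
  with \<open>N u = v\<close> show ?thesis
    by blast
qed

lemma N_bij: "bij_betw N {0<..} {0<..<1}"
proof (rule bij_betw_imageI)
  show "inj_on N {0<..}"
    using N_inj by (intro inj_onI) auto
  have "N ` {0<..} \<subseteq> {0<..<1}"
    using N_pos N_less_1 by auto
  moreover have "v \<in> N ` {0<..}" if "v \<in> {0<..<1}" for v
    using N_attains[of v] that by auto
  ultimately show "N ` {0<..} = {0<..<1}"
    by auto
qed

lemma N_powr_kappa: "0 \<le> t \<Longrightarrow> N t powr \<kappa> = N t * N t powr (\<kappa> - 1)"
  using powr_add[of "N t" 1 "\<kappa> - 1"] N_pos[of t] by simp

lemma N_powr_less_iff:
  assumes "0 \<le> s" "0 \<le> t"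
  shows "N s powr (\<kappa> - 1) < N t powr (\<kappa> - 1) \<longleftrightarrow> t < s"
proof -
  have "0 < \<kappa> - 1" "0 < N s" "0 < N t"
    using kappa_gt_1 N_pos assms by auto
  then have "N s powr (\<kappa> - 1) < N t powr (\<kappa> - 1) \<longleftrightarrow> N s < N t"
    using powr_less_mono2[of "\<kappa> - 1" "N s" "N t"] powr_less_cancel2[of "\<kappa> - 1" "N s" "N t"]
    by auto
  then show ?thesis
    using N_less_iff assms by simp
qed

lemma S_eq_I_iff:
  assumes "0 \<le> t"
  shows "S t = I t \<longleftrightarrow> 2 * S0 * N t powr (\<kappa> - 1) = 1"
proof -
  have "S t = I t \<longleftrightarrow> N t * (2 * S0 * N t powr (\<kappa> - 1)) = N t * 1"
    using S_eq[OF assms] I_eq[OF assms] N_powr_kappa[OF assms] by auto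
  then show ?thesis
    using N_pos[OF assms] by simp
qed

lemma S_eq_R_iff: "0 \<le> t \<Longrightarrow> S t = R t \<longleftrightarrow> S0 * N t powr \<kappa> = 1 - N t"
  using S_eq R_eq by simp

lemma I_eq_R_iff: "0 \<le> t \<Longrightarrow> I t = R t \<longleftrightarrow> 2 * N t - S0 * N t powr \<kappa> = 1"
  using I_eq R_eq by auto

lemma ex1_S_eq_I:
  assumes "1 < 2 * S0"
  shows "\<exists>!t. 0 < t \<and> S t = I t"
proof -
  have "(\<exists>!t. t \<in> {0<..} \<and> S t = I t) \<longleftrightarrow>
      (\<exists>!n. n \<in> {0<..<1} \<and> 2 * S0 * n powr (\<kappa> - 1) = 1)"
    by (rule bij_betw_ex1_iff[OF N_bij]) (simp add: S_eq_I_iff)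
  moreover have "\<exists>!n. n \<in> {0<..<1} \<and> 2 * S0 * n powr (\<kappa> - 1) = 1"
    using kappa_gt_1 assms by (intro ex1_mult_powr_eq_1) auto
  ultimately show ?thesis
    by simp
qed

lemma ex1_S_eq_R: "\<exists>!t. 0 < t \<and> S t = R t"
proof -
  have "(\<exists>!t. t \<in> {0<..} \<and> S t = R t) \<longleftrightarrow>
      (\<exists>!n. n \<in> {0<..<1} \<and> S0 * n powr \<kappa> = 1 - n)"
    by (rule bij_betw_ex1_iff[OF N_bij]) (simp add: S_eq_R_iff)
  moreover have "\<exists>!n. n \<in> {0<..<1} \<and> S0 * n powr \<kappa> = 1 - n"
    using kappa_gt_1 S0_pos by (intro ex1_powr_eq_one_minus) auto
  ultimately show ?thesis
    by simp
qed

lemma ex1_I_eq_R: "\<exists>!t. 0 < t \<and> I t = R t"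
proof -
  have "(\<exists>!t. t \<in> {0<..} \<and> I t = R t) \<longleftrightarrow>
      (\<exists>!n. n \<in> {0<..<1} \<and> 2 * n - S0 * n powr \<kappa> = 1)"
    by (rule bij_betw_ex1_iff[OF N_bij]) (simp add: I_eq_R_iff)
  moreover have "\<exists>!n. n \<in> {0<..<1} \<and> 2 * n - S0 * n powr \<kappa> = 1"
    using kappa_gt_1 S0_pos S0_less_1 by (intro ex1_two_minus_powr_eq_one) auto
  ultimately show ?thesis
    by simp
qed

lemma I_less_at_critical:
  assumes crit: "\<kappa> * S0 * N tp powr (\<kappa> - 1) = 1"
    and "0 \<le> tp" "0 \<le> t" "t \<noteq> tp"
  shows "I t < I tp"
proof -
  have "N t - S0 * N t powr \<kappa> < N tp - S0 * N tp powr \<kappa>"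
    using N_inj[of t tp] assms N_pos kappa_gt_1 S0_pos
    by (intro linear_minus_powr_max) (auto simp: mult.assoc)
  then show ?thesis
    using I_eq assms by simp
qed

lemma ex_critical_time:
  assumes "1 < \<kappa> * S0"
  shows "\<exists>t>0. \<kappa> * S0 * N t powr (\<kappa> - 1) = 1"
proof -
  obtain n where "n \<in> {0<..<1}" "\<kappa> * S0 * n powr (\<kappa> - 1) = 1"
    using ex1_mult_powr_eq_1[of "\<kappa> - 1" "\<kappa> * S0"] kappa_gt_1 assms by auto
  then show ?thesis
    using N_attains[of n] by auto
qed

lemma I_max_iff:
  assumes "1 < \<kappa> * S0" "0 \<le> tp"
  shows "(\<forall>t\<ge>0. I t \<le> I tp) \<longleftrightarrow> \<kappa> * S0 * N tp powr (\<kappa> - 1) = 1"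
proof
  assume max: "\<forall>t\<ge>0. I t \<le> I tp"
  obtain tq where "0 < tq" and crit: "\<kappa> * S0 * N tq powr (\<kappa> - 1) = 1"
    using ex_critical_time assms(1) by blast
  have "tp = tq"
  proof (rule ccontr)
    assume "tp \<noteq> tq"
    then have "I tp < I tq"
      using I_less_at_critical[of tq tp] \<open>0 < tq\<close> crit assms(2) by simp
    with max \<open>0 < tq\<close> show False
      by (meson less_imp_le not_le)
  qed
  with crit show "\<kappa> * S0 * N tp powr (\<kappa> - 1) = 1"
    by simp
next
  assume crit: "\<kappa> * S0 * N tp powr (\<kappa> - 1) = 1"
  show "\<forall>t\<ge>0. I t \<le> I tp"
  proof (intro allI impI)
    fix t :: real assume "0 \<le> t"
    then show "I t \<le> I tp"
      using I_less_at_critical[OF crit assms(2)] by (cases "t = tp") (auto intro: less_imp_le)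
  qed
qed

lemma ex_I_max:
  assumes "1 < \<kappa> * S0"
  shows "\<exists>tp>0. \<forall>t\<ge>0. I t \<le> I tp"
proof -
  obtain tp where "0 < tp" "\<kappa> * S0 * N tp powr (\<kappa> - 1) = 1"
    using ex_critical_time[OF assms] by blast
  then show ?thesis
    using I_max_iff[OF assms, of tp] by auto
qed

text \<open>N^(\<kappa>-1) is 1/(2 S0) at the crossing, 1/(\<kappa> S0) at the peak, and decreasing in time.\<close>
lemma crossing_vs_peak:
  assumes "1 < \<kappa> * S0" "0 < tp" "\<forall>t\<ge>0. I t \<le> I tp" "0 < ts" "S ts = I ts"
  shows "(ts < tp \<longleftrightarrow> 2 < \<kappa>) \<and> (ts = tp \<longleftrightarrow> \<kappa> = 2) \<and> (tp < ts \<longleftrightarrow> \<kappa> < 2)"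
proof -
  define p s where "p = N tp powr (\<kappa> - 1)" and "s = N ts powr (\<kappa> - 1)"
  have "S0 * (\<kappa> * p) = 1" "S0 * (2 * s) = 1"
    using I_max_iff[of tp] S_eq_I_iff[of ts] assms by (auto simp: p_def s_def ac_simps)
  then have eq: "\<kappa> * p = 2 * s"
    using S0_pos by (metis mult_left_cancel less_irrefl)
  have "0 < p"
    using N_pos[of tp] assms by (simp add: p_def)
  then have "p < s \<longleftrightarrow> 2 < \<kappa>" "s < p \<longleftrightarrow> \<kappa> < 2"
    using eq mult_less_cancel_right_pos[of p 2 \<kappa>] mult_less_cancel_right_pos[of p \<kappa> 2]
    by (simp_all add: mult.commute)
  then have "ts < tp \<longleftrightarrow> 2 < \<kappa>" "tp < ts \<longleftrightarrow> \<kappa> < 2"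
    using N_powr_less_iff[of tp ts] N_powr_less_iff[of ts tp] assms by (auto simp: p_def s_def)
  then show ?thesis
    by (metis linorder_neqE_linordered_idom order_less_irrefl)
qed

lemma triple_point_iff:
  assumes "0 \<le> t"
  shows "(S t = I t \<and> I t = R t) \<longleftrightarrow> N t = 2 / 3 \<and> S0 * (2 / 3) powr \<kappa> = 1 / 3"
proof -
  have "(S t = I t \<and> I t = R t) \<longleftrightarrow> N t = 2 / 3 \<and> S0 * N t powr \<kappa> = 1 / 3"
    unfolding S_eq[OF assms] I_eq[OF assms] R_eq[OF assms] by arith
  then show ?thesis
    by metis
qed

lemma ex_triple_point_iff:
  "(\<exists>t>0. S t = I t \<and> I t = R t) \<longleftrightarrow>
    \<kappa> < ln 3 / (ln 3 - ln 2) \<and> S0 = 1 / 3 * (3 / 2) powr \<kappa>"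
proof -
  have S0_iff: "S0 * (2 / 3) powr \<kappa> = 1 / 3 \<longleftrightarrow> S0 = 1 / 3 * (3 / 2) powr \<kappa>"
    by (auto simp: powr_divide field_simps)
  have "(\<exists>t>0. S t = I t \<and> I t = R t) \<longleftrightarrow>
      (\<exists>t>0. N t = 2 / 3) \<and> S0 * (2 / 3) powr \<kappa> = 1 / 3"
    using triple_point_iff by (auto intro: less_imp_le)
  also have "\<dots> \<longleftrightarrow> S0 = 1 / 3 * (3 / 2) powr \<kappa>"
    using N_attains[of "2 / 3"] S0_iff by simp
  finally have "(\<exists>t>0. S t = I t \<and> I t = R t) \<longleftrightarrow> S0 = 1 / 3 * (3 / 2) powr \<kappa>" .
  then show ?thesis
    using S0_less_1 third_three_halves_powr_less_1_iff[of \<kappa>] by auto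
qed

lemma triple_point_at_peak_iff:
  assumes "1 < \<kappa> * S0" "0 < tp" "\<forall>t\<ge>0. I t \<le> I tp"
  shows "(S tp = I tp \<and> I tp = R tp) \<longleftrightarrow> \<kappa> = 2 \<and> S0 = 3 / 4"
proof -
  have crit: "\<kappa> * S0 * N tp powr (\<kappa> - 1) = 1"
    using I_max_iff assms by auto
  show ?thesis
  proof
    assume triple: "S tp = I tp \<and> I tp = R tp"
    then have "\<kappa> = 2"
      using crossing_vs_peak[of tp tp] assms by auto
    moreover have "N tp = 2 / 3"
      using triple_point_iff triple assms by auto
    ultimately show "\<kappa> = 2 \<and> S0 = 3 / 4"
      using crit by (simp only:) simp
  next
    assume params: "\<kappa> = 2 \<and> S0 = 3 / 4"
    then have "2 * (3 / 4) * N tp powr (2 - 1) = 1"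
      using crit by (simp only:)
    then have "N tp = 2 / 3"
      using N_pos[of tp] assms by simp
    moreover have "S0 * (2 / 3) powr \<kappa> = 1 / 3"
      using params by (simp only:) (simp add: power2_eq_square)
    ultimately show "S tp = I tp \<and> I tp = R tp"
      using triple_point_iff[of tp] assms by simp
  qed
qed

end

theorem proposition2:
  fixes \<alpha> \<beta> S0 I0 :: real and S I R :: "real \<Rightarrow> real"
  assumes "\<alpha> > 0" and "\<beta> > \<alpha>"
    and "S0 > I0" and "I0 > 0" and "S0 + I0 = 1" and "S0 > \<alpha> / \<beta>"
    and "S 0 = S0" and "I 0 = I0" and "R 0 = 0"
    and dS: "\<And>t. t \<ge> 0 \<Longrightarrow>
       (S has_real_derivative (- \<beta> * S t * I t / (S t + I t))) (at t within {0..})"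
    and dI: "\<And>t. t \<ge> 0 \<Longrightarrow>
       (I has_real_derivative (\<beta> * S t * I t / (S t + I t) - \<alpha> * I t)) (at t within {0..})"
    and dR: "\<And>t. t \<ge> 0 \<Longrightarrow>
       (R has_real_derivative (\<alpha> * I t)) (at t within {0..})"
  shows "(\<exists>!t. t > 0 \<and> S t = I t)
    \<and> (\<exists>!t. t > 0 \<and> S t = R t)
    \<and> (\<exists>!t. t > 0 \<and> I t = R t)
    \<and> (\<exists>tp > 0. \<forall>t \<ge> 0. I t \<le> I tp)
    \<and> (\<forall>tp. tp > 0 \<and> (\<forall>t \<ge> 0. I t \<le> I tp) \<longrightarrow>
         (\<forall>ts. ts > 0 \<and> S ts = I ts \<longrightarrow>
             (\<beta> > 2 * \<alpha> \<longrightarrow> ts < tp)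
           \<and> (\<beta> = 2 * \<alpha> \<longrightarrow> ts = tp)
           \<and> (\<beta> < 2 * \<alpha> \<longrightarrow> ts > tp))
       \<and> ((S tp = I tp \<and> I tp = R tp) \<longleftrightarrow> (\<beta> = 2 * \<alpha> \<and> S0 = 3 / 4)))
    \<and> ((\<exists>t > 0. S t = I t \<and> I t = R t) \<longleftrightarrow>
         (\<beta> / \<alpha> < ln 3 / (ln 3 - ln 2) \<and> S0 = (1 / 3) * (3 / 2) powr (\<beta> / \<alpha>)))"
proof -
  interpret sir_epidemic \<alpha> \<beta> S I R S0
    by unfold_locales (use assms in auto)
  have crossing: "1 < 2 * S0" and peak: "1 < \<kappa> * S0"
    using assms by (auto simp: \<kappa>_def field_simps)
  have "2 < \<kappa> \<longleftrightarrow> \<beta> > 2 * \<alpha>" "\<kappa> = 2 \<longleftrightarrow> \<beta> = 2 * \<alpha>" "\<kappa> < 2 \<longleftrightarrow> \<beta> < 2 * \<alpha>"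
    using assms(1) by (auto simp: \<kappa>_def field_simps)
  then have "\<forall>tp. tp > 0 \<and> (\<forall>t \<ge> 0. I t \<le> I tp) \<longrightarrow>
         (\<forall>ts. ts > 0 \<and> S ts = I ts \<longrightarrow>
             (\<beta> > 2 * \<alpha> \<longrightarrow> ts < tp)
           \<and> (\<beta> = 2 * \<alpha> \<longrightarrow> ts = tp)
           \<and> (\<beta> < 2 * \<alpha> \<longrightarrow> ts > tp))
       \<and> ((S tp = I tp \<and> I tp = R tp) \<longleftrightarrow> (\<beta> = 2 * \<alpha> \<and> S0 = 3 / 4))"
    using crossing_vs_peak[OF peak] triple_point_at_peak_iff[OF peak] by auto
  then show ?thesis
    using ex1_S_eq_I[OF crossing] ex1_S_eq_R ex1_I_eq_R ex_I_max[OF peak]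
      ex_triple_point_iff[unfolded \<kappa>_def]
    by blast
qed

end
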